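(* Let $S_1,\ldots,S_m$ be formulas ($m\ge1$). The doxastic state $\emptyset[S_1,S_2,\ldots,S_m]$ coincides with $\emptyset[S_2,\ldots,S_m]$ if and only if, for every Q-combination $Q$ of $S_2,\ldots,S_m$, either $Q\models S_1$ or $Q\models\neg S_1$.
   Context: Propositional models are truth assignments over a finite set of variables; a formula used where a set of models is expected stands for its set of models. A doxastic state is a sequence $[C(0),\ldots,C(k)]$ of nonempty, pairwise disjoint sets of models covering all models; two doxastic states coincide when they are equal (equivalently, induce the same preorder $I\le J$ iff the class index of $I$ is at most that of $J$). The flat doxastic state $\emptyset$ is $[\text{all models}]$. Lexicographic revision: $C\,\mathrm{lex}(A) = [C(0)\cap A,\ldots,C(k)\cap A, C(0)\setminus A,\ldots,C(k)\setminus A]$, empty sets discarded. $\emptyset[S_1,\ldots,S_m]$ denotes $\emptyset$ revised lexicographically by $S_1$, then $S_2$, ..., then $S_m$. A Q-combination of formulas $T_1,\ldots,T_n$ is a formula $(B_1\equiv T_1)\wedge\cdots\wedge(B_n\equiv T_n)$ with each $B_i\in\{\mathsf{true},\mathsf{false}\}$ (for $n=0$ it is $\mathsf{true}$). *)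

theory Defs
  imports Main
begin

datatype 'v form = FTrue | FFalse | Var 'v | Neg "'v form"
  | Conj "'v form" "'v form" | Disj "'v form" "'v form" | Iff "'v form" "'v form"

type_synonym 'v model = "'v \<Rightarrow> bool"

fun holds :: "'v model \<Rightarrow> 'v form \<Rightarrow> bool" where
  "holds I FTrue = True"
| "holds I FFalse = False"
| "holds I (Var v) = I v"
| "holds I (Neg f) = (\<not> holds I f)"
| "holds I (Conj f g) = (holds I f \<and> holds I g)"
| "holds I (Disj f g) = (holds I f \<or> holds I g)"
| "holds I (Iff f g) = (holds I f = holds I g)"

definition mods :: "'v form \<Rightarrow> 'v model set" where
  "mods f = {I. holds I f}"

definition entails :: "'v form \<Rightarrow> 'v form \<Rightarrow> bool" (infix "\<Turnstile>" 50) where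
  "f \<Turnstile> g \<longleftrightarrow> mods f \<subseteq> mods g"

type_synonym 'v doxstate = "'v model set list"

definition lex :: "'v doxstate \<Rightarrow> 'v form \<Rightarrow> 'v doxstate" where
  "lex C A = filter (\<lambda>X. X \<noteq> {})
      (map (\<lambda>X. X \<inter> mods A) C @ map (\<lambda>X. X - mods A) C)"

definition flat :: "'v doxstate" where
  "flat = [UNIV]"

definition revise_seq :: "'v form list \<Rightarrow> 'v doxstate" where
  "revise_seq Ss = foldl lex flat Ss"

fun bconst :: "bool \<Rightarrow> 'v form" where
  "bconst True = FTrue" | "bconst False = FFalse"

fun qcomb :: "bool list \<Rightarrow> 'v form list \<Rightarrow> 'v form" where
  "qcomb [] [] = FTrue"
| "qcomb [B] [T] = Iff (bconst B) T"
| "qcomb (B # Bs) (T # Ts) = Conj (Iff (bconst B) T) (qcomb Bs Ts)"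
| "qcomb _ _ = FTrue"

definition is_qcomb :: "'v form \<Rightarrow> 'v form list \<Rightarrow> bool" where
  "is_qcomb Q Ts \<longleftrightarrow> (\<exists>Bs. length Bs = length Ts \<and> Q = qcomb Bs Ts)"

end

theory Submission
  imports Defs
begin

text \<open>Revising by the later formulas S2, ..., Sm splits the model space into the cells
  mods Q of the Q-combinations Q of S2, ..., Sm, and revising by S1 first only refines each
  of these cells into its S1-part followed by its non-S1-part. Hence the two states coincide
  iff no cell is split, i.e. iff every Q-combination entails S1 or its negation; if some cell
  is split, the number of nonempty classes strictly grows.\<close>

abbreviation nonempty_classes :: "'a set list \<Rightarrow> 'a set list" where
  "nonempty_classes C \<equiv> filter (\<lambda>X. X \<noteq> {}) C"

definition lex_raw :: "'v doxstate \<Rightarrow> 'v form \<Rightarrow> 'v doxstate" where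
  "lex_raw C A = map (\<lambda>X. X \<inter> mods A) C @ map (\<lambda>X. X - mods A) C"

definition qcells :: "'v form list \<Rightarrow> 'v model set list" where
  "qcells Ss = foldl lex_raw [UNIV] Ss"

definition split_by :: "'a set \<Rightarrow> 'a set list \<Rightarrow> 'a set list" where
  "split_by S L = concat (map (\<lambda>Y. [S \<inter> Y, Y - S]) L)"

lemma nonempty_classes_map_nonempty_classes:
  assumes "\<And>X. f X \<subseteq> X"
  shows "nonempty_classes (map f (nonempty_classes C)) = nonempty_classes (map f C)"
  using assms by (induction C) auto

lemma nonempty_classes_lex_raw:
  "nonempty_classes (lex_raw C A) = lex (nonempty_classes C) A"
  unfolding lex_def lex_raw_def filter_append
  by (subst (1 2) nonempty_classes_map_nonempty_classes) auto

lemma foldl_lex_nonempty_classes: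
  "foldl lex (nonempty_classes C) Ss = nonempty_classes (foldl lex_raw C Ss)"
  by (induction Ss arbitrary: C) (simp_all flip: nonempty_classes_lex_raw)

lemma revise_seq_eq_qcells: "revise_seq Ss = nonempty_classes (qcells Ss)"
  using foldl_lex_nonempty_classes[of "[UNIV]" Ss]
  by (simp add: revise_seq_def flat_def qcells_def)

lemma foldl_lex_raw_eq_refine_qcells:
  "foldl lex_raw C Ss = concat (map (\<lambda>Y. map (\<lambda>X. X \<inter> Y) C) (qcells Ss))"
proof (induction Ss rule: rev_induct)
  case Nil
  then show ?case by (simp add: qcells_def)
next
  case (snoc A Ss)
  then show ?case
    by (simp add: qcells_def lex_raw_def map_concat comp_def Int_assoc Int_Diff)
qed

lemma qcells_Cons: "qcells (A # Ss) = split_by (mods A) (qcells Ss)"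
  using foldl_lex_raw_eq_refine_qcells[of "[mods A, - mods A]" Ss]
  by (simp add: qcells_def split_by_def lex_raw_def Int_commute Diff_eq)

lemma is_qcomb_Cons:
  "is_qcomb Q (A # Ss) \<longleftrightarrow> (\<exists>b bs. length bs = length Ss \<and> Q = qcomb (b # bs) (A # Ss))"
  unfolding is_qcomb_def by (auto simp: length_Suc_conv)

lemma mods_qcomb_Cons:
  assumes "length bs = length Ss"
  shows "mods (qcomb (b # bs) (A # Ss)) = (if b then mods A else - mods A) \<inter> mods (qcomb bs Ss)"
  using assms by (cases Ss; cases bs; cases b) (auto simp: mods_def)

lemma mods_qcombs_Cons:
  "{mods Q | Q. is_qcomb Q (A # Ss)} = (\<Union>Y \<in> {mods Q | Q. is_qcomb Q Ss}. {mods A \<inter> Y, Y - mods A})"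
proof (intro equalityI subsetI)
  fix Z assume "Z \<in> {mods Q | Q. is_qcomb Q (A # Ss)}"
  then obtain b bs where bs: "length bs = length Ss" and Z: "Z = mods (qcomb (b # bs) (A # Ss))"
    by (auto simp: is_qcomb_Cons)
  have "mods (qcomb bs Ss) \<in> {mods Q | Q. is_qcomb Q Ss}"
    using bs by (auto simp: is_qcomb_def)
  then show "Z \<in> (\<Union>Y \<in> {mods Q | Q. is_qcomb Q Ss}. {mods A \<inter> Y, Y - mods A})"
    using Z by (cases b) (auto simp: mods_qcomb_Cons bs Diff_eq Int_commute)
next
  fix Z assume "Z \<in> (\<Union>Y \<in> {mods Q | Q. is_qcomb Q Ss}. {mods A \<inter> Y, Y - mods A})"
  then obtain bs where bs: "length bs = length Ss"
    and Z: "Z = mods A \<inter> mods (qcomb bs Ss) \<or> Z = mods (qcomb bs Ss) - mods A"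
    by (auto simp: is_qcomb_def)
  then obtain b where "Z = mods (qcomb (b # bs) (A # Ss))"
    by (metis mods_qcomb_Cons Diff_eq Int_commute)
  then show "Z \<in> {mods Q | Q. is_qcomb Q (A # Ss)}"
    using bs by (auto simp: is_qcomb_Cons)
qed

lemma set_qcells: "set (qcells Ss) = {mods Q | Q. is_qcomb Q Ss}"
proof (induction Ss)
  case Nil
  then show ?case by (auto simp: qcells_def is_qcomb_def mods_def)
next
  case (Cons A Ss)
  then show ?case by (auto simp: qcells_Cons split_by_def mods_qcombs_Cons)
qed

lemma nonempty_classes_split_by_unsplit:
  assumes "\<forall>Y\<in>set L. Y \<subseteq> S \<or> Y \<inter> S = {}"
  shows "nonempty_classes (split_by S L) = nonempty_classes L"
  using assms by (induction L) (auto simp: split_by_def Int_absorb1 Int_commute)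

lemma length_nonempty_classes_split_by_ge:
  "length (nonempty_classes L) \<le> length (nonempty_classes (split_by S L))"
  by (induction L) (auto simp: split_by_def)

lemma length_nonempty_classes_split_by_gt:
  assumes "\<exists>Y\<in>set L. \<not> (Y \<subseteq> S \<or> Y \<inter> S = {})"
  shows "length (nonempty_classes L) < length (nonempty_classes (split_by S L))"
  using assms
proof (induction L)
  case (Cons Y L)
  with length_nonempty_classes_split_by_ge[of L S] show ?case
    by (auto simp: split_by_def)
qed simp

lemma nonempty_classes_split_by_eq_iff:
  "nonempty_classes (split_by S L) = nonempty_classes L \<longleftrightarrow> (\<forall>Y\<in>set L. Y \<subseteq> S \<or> Y \<inter> S = {})"
  using nonempty_classes_split_by_unsplit length_nonempty_classes_split_by_gt
  by (metis less_irrefl)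

lemma entails_Neg_iff: "Q \<Turnstile> Neg S \<longleftrightarrow> mods Q \<inter> mods S = {}"
  by (auto simp: entails_def mods_def)

theorem mainTheorem6:
  fixes S1 :: "'v::finite form" and Ss :: "'v form list"
  shows "revise_seq (S1 # Ss) = revise_seq Ss \<longleftrightarrow>
         (\<forall>Q. is_qcomb Q Ss \<longrightarrow> (Q \<Turnstile> S1 \<or> Q \<Turnstile> Neg S1))"
proof -
  have "revise_seq (S1 # Ss) = revise_seq Ss \<longleftrightarrow>
        (\<forall>Y\<in>set (qcells Ss). Y \<subseteq> mods S1 \<or> Y \<inter> mods S1 = {})"
    by (simp add: revise_seq_eq_qcells qcells_Cons nonempty_classes_split_by_eq_iff)
  also have "\<dots> \<longleftrightarrow> (\<forall>Q. is_qcomb Q Ss \<longrightarrow> (Q \<Turnstile> S1 \<or> Q \<Turnstile> Neg S1))"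
    unfolding set_qcells entails_Neg_iff by (auto simp: entails_def)
  finally show ?thesis .
qed

end
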